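(* For every $n\ge1$, $4Q_n(x/2)$ is divisible by $(x-2)^2$; writing $4Q_n(x/2)=(x-2)^2R_n(x)$ with $R_n$ a polynomial, one has the factorization \[ \Phi_n(x)=\tilde U^{\mathrm e}_n(x)\cdot 4Q_n\Big(\frac x2\Big)=(x-2)^2\cdot\tilde U^{\mathrm e}_n(x)\cdot R_n(x). \]
   Context: $U_n$ is the Chebyshev polynomial of the second kind, $U_n(\cos\theta)=\sin((n+1)\theta)/\sin\theta$, extended by $U_{-1}=0$, $U_{-2}=-1$; $\tilde U_n(x)=U_n(x/2)$, and $\Phi_n(x)=((n+1)x^2-6x-4n)\tilde U_n(x)+2(x+2)\tilde U_{n-1}(x)+2(x+2)$. $U^{\mathrm e}_n$ is defined by $U^{\mathrm e}_n(\cos\theta)=\frac{\sin((n+1)\theta/2)}{\sin(\theta/2)}$ for $n$ even and $\frac{\sin((n+1)\theta/2)}{\sin\theta}$ for $n$ odd, and $\tilde U^{\mathrm e}_n(x)=U^{\mathrm e}_n(x/2)$. For $k\ge1$, $Q_{2k}(x)=((2k+1)x^2-3x-2k)(U_k(x)-U_{k-1}(x))+(x+1)(U_{k-1}(x)-U_{k-2}(x))$, and for $k\ge0$, $Q_{2k+1}(x)=((2k+2)x^2-3x-2k-1)(U_{k+1}(x)-U_{k-1}(x))+(x+1)(U_k(x)-U_{k-2}(x))$. *)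

theory Defs
  imports Complex_Main "HOL-Computational_Algebra.Polynomial"
begin

fun chebU_nat :: "nat \<Rightarrow> real poly" where
  "chebU_nat 0 = 1"
| "chebU_nat (Suc 0) = [:0, 2:]"
| "chebU_nat (Suc (Suc n)) = [:0, 2:] * chebU_nat (Suc n) - chebU_nat n"

definition chebU :: "int \<Rightarrow> real poly" where
  "chebU n = (if n \<ge> 0 then chebU_nat (nat n)
              else if n = -1 then 0
              else if n = -2 then -1 else undefined)"

definition chebUt :: "int \<Rightarrow> real poly" where
  "chebUt n = pcompose (chebU n) [:0, 1/2:]"

definition Phi :: "nat \<Rightarrow> real poly" where
  "Phi n = [:- 4 * real n, -6, real n + 1:] * chebUt (int n)
           + smult 2 [:2, 1:] * chebUt (int n - 1) + smult 2 [:2, 1:]"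

definition chebUe :: "nat \<Rightarrow> real poly" where
  "chebUe n = (THE p. \<forall>t::real.
      (if even n then sin (t/2) \<noteq> 0 \<longrightarrow> poly p (cos t) = sin ((real n + 1) * t / 2) / sin (t/2)
       else sin t \<noteq> 0 \<longrightarrow> poly p (cos t) = sin ((real n + 1) * t / 2) / sin t))"

definition chebUet :: "nat \<Rightarrow> real poly" where
  "chebUet n = pcompose (chebUe n) [:0, 1/2:]"

definition chebQ :: "nat \<Rightarrow> real poly" where
  "chebQ n = (let k = int (n div 2) in
     if even n then
       [:- of_int (2*k), -3, of_int (2*k+1):] * (chebU k - chebU (k-1))
       + [:1, 1:] * (chebU (k-1) - chebU (k-2))
     else
       [:- of_int (2*k+1), -3, of_int (2*k+2):] * (chebU (k+1) - chebU (k-1))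
       + [:1, 1:] * (chebU k - chebU (k-2)))"

end

theory Submission
  imports Defs
begin

text \<open>
  Write U_k for U_k(X). The addition formula and Cassini's identity
  U_(m-1)^2 - U_m U_(m-2) = 1 give
    U_(2m) = (U_m + U_(m-1)) (U_m - U_(m-1)),     U_(2m-1) + 1 = (U_m + U_(m-1)) (U_(m-1) - U_(m-2)),
    U_(2m+1) = U_m (U_(m+1) - U_(m-1)),           U_(2m) + 1 = U_m (U_m - U_(m-2)).
  The sine formulas identify U^e_(2m) = U_m + U_(m-1) and U^e_(2m+1) = U_m, so
  Phi_n(2X)/4 = ((n+1)X^2 - 3X - n) U_n + (X+1) (U_(n-1) + 1) factors as U^e_n Q_n.
  Finally U_k(1) = k+1 and U_k'(1) = k(k+1)(k+2)/3 give Q_n(1) = Q_n'(1) = 0,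
  so (X-1)^2 divides Q_n.
\<close>

text \<open>chebU_seq x k is U_(k-2)(x/2) over an arbitrary commutative ring: the shift by two
  turns the extension U_(-2) = -1, U_(-1) = 0 into the initial values.\<close>

fun chebU_seq :: "'a::comm_ring_1 \<Rightarrow> nat \<Rightarrow> 'a" where
  "chebU_seq x 0 = -1"
| "chebU_seq x (Suc 0) = 0"
| "chebU_seq x (Suc (Suc k)) = x * chebU_seq x (Suc k) - chebU_seq x k"

lemma chebU_seq_rec: "chebU_seq x (k + 2) = x * chebU_seq x (k + 1) - chebU_seq x k"
  by (simp add: numeral_2_eq_2)

declare chebU_seq.simps(3) [simp del]

lemma chebU_seq_add:
  "chebU_seq x (a + b + 1) = chebU_seq x (a + 1) * chebU_seq x (b + 2) - chebU_seq x a * chebU_seq x (b + 1)"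
proof (induction b rule: induct_nat_012)
  case (ge2 b)
  let ?U = "chebU_seq x"
  have rec: "?U (a + Suc (Suc b) + 1) = x * ?U (a + Suc b + 1) - ?U (a + b + 1)"
    "?U (Suc (Suc b) + 2) = x * ?U (Suc b + 2) - ?U (b + 2)"
    "?U (Suc (Suc b) + 1) = x * ?U (Suc b + 1) - ?U (b + 1)"
    by (simp_all add: chebU_seq.simps(3))
  show ?case
    unfolding rec ge2 by (simp add: algebra_simps)
qed (simp_all add: chebU_seq.simps(3))

lemma chebU_seq_cassini: "chebU_seq x (m + 1)^2 - chebU_seq x (m + 2) * chebU_seq x m = 1"
proof (induction m)
  case (Suc m)
  let ?U = "chebU_seq x"
  have rec: "?U (Suc m + 2) = x * ?U (m + 2) - ?U (m + 1)" "?U (m + 2) = x * ?U (m + 1) - ?U m"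
    by (simp_all add: chebU_seq.simps(3))
  have "?U (Suc m + 1)^2 - ?U (Suc m + 2) * ?U (Suc m) = ?U (m + 2) * (?U (m + 2) - x * ?U (m + 1)) + ?U (m + 1)^2"
    unfolding rec(1) by (simp add: algebra_simps power2_eq_square)
  also have "\<dots> = ?U (m + 1)^2 - ?U (m + 2) * ?U m"
    unfolding rec(2) by (simp add: algebra_simps)
  finally show ?case using Suc by simp
qed (simp add: chebU_seq.simps(3))

lemma poly_chebU_seq: "poly (chebU_seq p k) y = chebU_seq (poly p y) k"
  by (induction k rule: induct_nat_012) (simp_all add: chebU_seq.simps(3))

lemma chebU_seq_two: "chebU_seq (2 :: 'a::comm_ring_1) k = of_nat k - 1"
  by (induction k rule: induct_nat_012) (simp_all add: chebU_seq.simps(3) algebra_simps)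

abbreviation chebU_shift :: "nat \<Rightarrow> real poly" where
  "chebU_shift \<equiv> chebU_seq [:0, 2:]"

lemma chebU_eq_chebU_shift:
  assumes "n \<ge> -2"
  shows "chebU n = chebU_shift (nat (n + 2))"
proof -
  have "chebU_nat k = chebU_shift (k + 2)" for k
    by (induction k rule: chebU_nat.induct) (simp_all add: chebU_seq.simps(3) numeral_2_eq_2)
  moreover have "n \<ge> 0 \<or> n = -1 \<or> n = -2"
    using assms by linarith
  ultimately show ?thesis
    by (auto simp: chebU_def nat_add_distrib)
qed

lemma sin_linear_recurrence:
  fixes f :: "nat \<Rightarrow> real"
  assumes rec: "\<And>k. f (k + 2) = 2 * cos b * f (k + 1) - f k"
    and "f 0 = sin a" and "f 1 = sin (a + b)"
  shows "f k = sin (a + real k * b)"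
proof (induction k rule: induct_nat_012)
  case (ge2 k)
  define x where "x = a + real (Suc k) * b"
  have "f (Suc (Suc k)) = 2 * cos b * sin x - sin (x - b)"
    using rec[of k] ge2 by (simp add: x_def algebra_simps)
  also have "\<dots> = sin (x + b)"
    by (simp add: sin_add sin_diff)
  also have "x + b = a + real (Suc (Suc k)) * b"
    by (simp add: x_def algebra_simps)
  finally show ?case .
qed (use assms in simp_all)

lemma chebU_seq_cos: "chebU_seq (2 * cos t) k * sin t = sin ((real k - 1) * t)"
proof -
  have "chebU_seq (2 * cos t) k * sin t = sin (- t + real k * t)"
    by (rule sin_linear_recurrence) (simp_all add: chebU_seq_rec chebU_seq.simps(3) algebra_simps)
  then show ?thesis
    by (simp add: algebra_simps)
qed

lemma chebU_seq_cos_half: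
  "(chebU_seq (2 * cos t) (k + 2) + chebU_seq (2 * cos t) (k + 1)) * sin (t / 2) = sin ((2 * real k + 1) * t / 2)"
proof -
  have "(chebU_seq (2 * cos t) (k + 2) + chebU_seq (2 * cos t) (k + 1)) * sin (t / 2) = sin (t / 2 + real k * t)"
  proof (rule sin_linear_recurrence)
    fix k
    show "(chebU_seq (2 * cos t) (k + 2 + 2) + chebU_seq (2 * cos t) (k + 2 + 1)) * sin (t / 2)
        = 2 * cos t * ((chebU_seq (2 * cos t) (k + 1 + 2) + chebU_seq (2 * cos t) (k + 1 + 1)) * sin (t / 2))
          - (chebU_seq (2 * cos t) (k + 2) + chebU_seq (2 * cos t) (k + 1)) * sin (t / 2)"
      by (simp add: chebU_seq.simps(3) eval_nat_numeral algebra_simps)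
  next
    have "sin (t / 2 + t) = 2 * cos t * sin (t / 2) - sin (t / 2 - t)"
      unfolding sin_add sin_diff by simp
    moreover have "sin (t / 2 - t) = - sin (t / 2)"
      by (simp flip: sin_minus)
    ultimately have "sin (t / 2 + t) = (2 * cos t + 1) * sin (t / 2)"
      by (simp add: algebra_simps)
    then show "(chebU_seq (2 * cos t) (1 + 2) + chebU_seq (2 * cos t) (1 + 1)) * sin (t / 2) = sin (t / 2 + t)"
      by (simp add: chebU_seq.simps(3) eval_nat_numeral)
  qed (simp add: chebU_seq.simps(3))
  then show ?thesis
    by (simp add: algebra_simps add_divide_distrib)
qed

lemma poly_eq_on_infinite:
  fixes p q :: "'a::idom poly"
  assumes "infinite A" and "\<And>x. x \<in> A \<Longrightarrow> poly p x = poly q x"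
  shows "p = q"
proof (rule ccontr)
  assume "p \<noteq> q"
  then have "finite {x. poly (p - q) x = 0}"
    by (intro poly_roots_finite) simp
  moreover have "A \<subseteq> {x. poly (p - q) x = 0}"
    using assms(2) by auto
  ultimately show False
    using assms(1) finite_subset by blast
qed

lemma poly_eq_on_cos:
  fixes p q :: "real poly"
  assumes "\<And>t. 0 < t \<Longrightarrow> t < pi \<Longrightarrow> poly p (cos t) = poly q (cos t)"
  shows "p = q"
proof (rule poly_eq_on_infinite)
  show "infinite {-1<..<1::real}"
    by simp
  fix x :: real
  assume "x \<in> {-1<..<1}"
  then have "0 < arccos x" "arccos x < pi" "cos (arccos x) = x"
    using arccos_lt_bounded[of x] by auto
  then show "poly p x = poly q x"
    using assms by metis
qed

lemma chebUe_eqI: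
  assumes "\<And>t. if even n
      then sin (t / 2) \<noteq> 0 \<longrightarrow> poly p (cos t) = sin ((real n + 1) * t / 2) / sin (t / 2)
      else sin t \<noteq> 0 \<longrightarrow> poly p (cos t) = sin ((real n + 1) * t / 2) / sin t"
  shows "chebUe n = p"
  unfolding chebUe_def
proof (rule the_equality)
  fix q
  assume q: "\<forall>t. if even n
      then sin (t / 2) \<noteq> 0 \<longrightarrow> poly q (cos t) = sin ((real n + 1) * t / 2) / sin (t / 2)
      else sin t \<noteq> 0 \<longrightarrow> poly q (cos t) = sin ((real n + 1) * t / 2) / sin t"
  show "q = p"
  proof (rule poly_eq_on_cos)
    fix t :: real
    assume "0 < t" "t < pi"
    then have "sin (t / 2) \<noteq> 0" "sin t \<noteq> 0"
      using sin_gt_zero[of t] sin_gt_zero[of "t / 2"] by auto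
    then show "poly q (cos t) = poly p (cos t)"
      using q assms[of t] by (auto split: if_splits)
  qed
qed (use assms in blast)

lemma chebUe_even: "chebUe (2 * m) = chebU_shift (m + 2) + chebU_shift (m + 1)"
proof (rule chebUe_eqI)
  fix t :: real
  show "if even (2 * m)
      then sin (t / 2) \<noteq> 0 \<longrightarrow> poly (chebU_shift (m + 2) + chebU_shift (m + 1)) (cos t)
             = sin ((real (2 * m) + 1) * t / 2) / sin (t / 2)
      else sin t \<noteq> 0 \<longrightarrow> poly (chebU_shift (m + 2) + chebU_shift (m + 1)) (cos t)
             = sin ((real (2 * m) + 1) * t / 2) / sin t"
    using chebU_seq_cos_half[of t m] by (simp add: poly_chebU_seq field_simps)
qed

lemma chebUe_odd: "chebUe (2 * m + 1) = chebU_shift (m + 2)"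
proof (rule chebUe_eqI)
  fix t :: real
  show "if even (2 * m + 1)
      then sin (t / 2) \<noteq> 0 \<longrightarrow> poly (chebU_shift (m + 2)) (cos t)
             = sin ((real (2 * m + 1) + 1) * t / 2) / sin (t / 2)
      else sin t \<noteq> 0 \<longrightarrow> poly (chebU_shift (m + 2)) (cos t)
             = sin ((real (2 * m + 1) + 1) * t / 2) / sin t" (is "?P")
  proof -
    have arg: "(real (2 * m + 1) + 1) * t / 2 = (real (m + 2) - 1) * t"
      by (simp add: field_simps)
    show ?P
      unfolding arg using chebU_seq_cos[of t "m + 2"] by (simp add: poly_chebU_seq field_simps)
  qed
qed

lemma chebQ_even:
  "chebQ (2 * m) = [:- (2 * real m), -3, 2 * real m + 1:] * (chebU_shift (m + 2) - chebU_shift (m + 1))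
                   + [:1, 1:] * (chebU_shift (m + 1) - chebU_shift m)"
  by (simp add: chebQ_def chebU_eq_chebU_shift nat_add_distrib)

lemma chebQ_odd:
  "chebQ (2 * m + 1) = [:- (2 * real m + 1), -3, 2 * real m + 2:] * (chebU_shift (m + 3) - chebU_shift (m + 1))
                       + [:1, 1:] * (chebU_shift (m + 2) - chebU_shift m)"
  by (simp add: chebQ_def chebU_eq_chebU_shift nat_add_distrib add.commute)

lemma Phi_eq_pcompose:
  "Phi n = smult 4 (pcompose ([:- real n, -3, real n + 1:] * chebU_shift (n + 2)
                              + [:1, 1:] * (chebU_shift (n + 1) + 1)) [:0, 1/2:])"
proof -
  let ?h = "[:0, 1/2:] :: real poly"
  have A: "smult 4 (pcompose [:- real n, -3, real n + 1:] ?h) = [:- 4 * real n, -6, real n + 1:]"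
    and B: "smult 4 (pcompose [:1, 1:] ?h) = smult 2 [:2, 1:]"
    by (simp_all add: pcompose_pCons)
  have "chebUt (int n) = pcompose (chebU_shift (n + 2)) ?h"
    and "chebUt (int n - 1) = pcompose (chebU_shift (n + 1)) ?h"
    by (simp_all add: chebUt_def chebU_eq_chebU_shift nat_add_distrib)
  then show ?thesis
    unfolding Phi_def A[symmetric] B[symmetric]
    by (simp only: pcompose_add pcompose_mult pcompose_1 mult_smult_left smult_add_right
        distrib_left mult_1_right add.assoc)
qed

lemma chebUe_mult_chebQ:
  "chebUe n * chebQ n = [:- real n, -3, real n + 1:] * chebU_shift (n + 2) + [:1, 1:] * (chebU_shift (n + 1) + 1)"
proof (cases "even n")
  case True
  then obtain m where n: "n = 2 * m" ..
  let ?P = "chebU_shift (m + 2)" and ?Q = "chebU_shift (m + 1)" and ?R = "chebU_shift m"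
  have cassini: "?Q^2 - ?P * ?R = 1"
    by (rule chebU_seq_cassini)
  have "chebU_shift (2 * m + 2) = ?P * ?P - ?Q * ?Q"
    using chebU_seq_add[of "[:0, 2::real:]" "m + 1" m] by (simp add: mult_2)
  then have U2: "chebU_shift (2 * m + 2) = (?P + ?Q) * (?P - ?Q)"
    by (simp add: algebra_simps)
  have "chebU_shift (2 * m + 1) = ?Q * ?P - ?R * ?Q"
    using chebU_seq_add[of "[:0, 2::real:]" m m] by (simp add: mult_2)
  then have U1: "chebU_shift (2 * m + 1) + 1 = (?P + ?Q) * (?Q - ?R)"
    using cassini by algebra
  have coeffs: "[:- real (2 * m), -3, real (2 * m) + 1:] = [:- (2 * real m), -3, 2 * real m + 1:]"
    by simp
  show ?thesis
    unfolding n chebUe_even chebQ_even U2 U1 coeffs by algebra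
next
  case False
  then obtain m where n: "n = 2 * m + 1" ..
  let ?P = "chebU_shift (m + 2)" and ?Q = "chebU_shift (m + 1)" and ?R = "chebU_shift m"
  have cassini: "?Q^2 - ?P * ?R = 1"
    by (rule chebU_seq_cassini)
  have U3: "chebU_shift (2 * m + 1 + 2) = ?P * (chebU_shift (m + 3) - ?Q)"
    using chebU_seq_add[of "[:0, 2::real:]" "m + 1" "m + 1"] by (simp add: mult_2 eval_nat_numeral algebra_simps)
  have "chebU_shift (2 * m + 1 + 1) = ?P * ?P - ?Q * ?Q"
    using chebU_seq_add[of "[:0, 2::real:]" "m + 1" m] by (simp add: mult_2)
  then have U2: "chebU_shift (2 * m + 1 + 1) + 1 = ?P * (?P - ?R)"
    using cassini by algebra
  have coeffs: "[:- real (2 * m + 1), -3, real (2 * m + 1) + 1:] = [:- (2 * real m + 1), -3, 2 * real m + 2:]"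
    by simp
  show ?thesis
    unfolding n chebUe_odd chebQ_odd U3 U2 coeffs by algebra
qed

lemma Phi_eq_chebUet_mult_chebQ: "Phi n = chebUet n * smult 4 (pcompose (chebQ n) [:0, 1/2:])"
  unfolding Phi_eq_pcompose chebUe_mult_chebQ[symmetric] chebUet_def
  by (simp add: pcompose_mult)

lemma square_dvd_of_double_root:
  fixes p :: "'a::idom poly"
  assumes "poly p a = 0" and "poly (pderiv p) a = 0"
  shows "[:- a, 1:]^2 dvd p"
proof -
  obtain q where q: "p = [:- a, 1:] * q"
    using assms(1) by (auto simp: poly_eq_0_iff_dvd)
  have "pderiv p = q + [:- a, 1:] * pderiv q"
    unfolding q by (simp add: pderiv_mult pderiv_pCons pderiv_diff pderiv_smult)
  then have "poly q a = 0"
    using assms(2) by simp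
  then obtain r where "q = [:- a, 1:] * r"
    by (auto simp: poly_eq_0_iff_dvd)
  then have "p = [:- a, 1:]^2 * r"
    unfolding q by (simp only: power2_eq_square mult.assoc)
  then show ?thesis ..
qed

lemma poly_chebU_shift_1: "poly (chebU_shift k) 1 = real k - 1"
  by (simp add: poly_chebU_seq chebU_seq_two)

lemma poly_pderiv_chebU_shift_1: "poly (pderiv (chebU_shift k)) 1 = (real k - 2) * (real k - 1) * real k / 3"
proof (induction k rule: induct_nat_012)
  case (ge2 k)
  have "poly (pderiv (chebU_shift (Suc (Suc k)))) 1
      = 2 * poly (chebU_shift (Suc k)) 1 + 2 * poly (pderiv (chebU_shift (Suc k))) 1 - poly (pderiv (chebU_shift k)) 1"
    by (simp add: chebU_seq.simps(3) pderiv_mult pderiv_diff pderiv_pCons pderiv_smult)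
  then show ?case
    unfolding ge2 poly_chebU_shift_1 by (simp add: field_simps)
qed (simp_all add: pderiv_minus)

lemma chebQ_double_root: "[:-1, 1:]^2 dvd chebQ n"
proof (cases "even n")
  case True
  then obtain m where n: "n = 2 * m" ..
  show ?thesis
  proof (rule square_dvd_of_double_root)
    show "poly (chebQ n) 1 = 0"
      unfolding n chebQ_even by (simp add: poly_chebU_shift_1)
    show "poly (pderiv (chebQ n)) 1 = 0"
      unfolding n chebQ_even
      by (simp add: poly_chebU_shift_1 poly_pderiv_chebU_shift_1 pderiv_mult pderiv_add pderiv_diff pderiv_pCons pderiv_smult)
         (simp add: field_simps)
  qed
next
  case False
  then obtain m where n: "n = 2 * m + 1" ..
  show ?thesis
  proof (rule square_dvd_of_double_root)
    show "poly (chebQ n) 1 = 0"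
      unfolding n chebQ_odd by (simp add: poly_chebU_shift_1)
    show "poly (pderiv (chebQ n)) 1 = 0"
      unfolding n chebQ_odd
      by (simp add: poly_chebU_shift_1 poly_pderiv_chebU_shift_1 pderiv_mult pderiv_add pderiv_diff pderiv_pCons pderiv_smult)
         (simp add: field_simps)
  qed
qed

theorem theoremB7:
  fixes n :: nat
  assumes "n \<ge> 1"
  shows "\<exists>R :: real poly.
           smult 4 (pcompose (chebQ n) [:0, 1/2:]) = [:-2, 1:]^2 * R
         \<and> Phi n = chebUet n * smult 4 (pcompose (chebQ n) [:0, 1/2:])
         \<and> Phi n = [:-2, 1:]^2 * chebUet n * R"
proof -
  obtain S where S: "chebQ n = [:-1, 1:]^2 * S"
    using chebQ_double_root[of n] ..
  define R where "R = pcompose S [:0, 1/2:]"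
  have "smult 4 (pcompose ([:-1, 1:]^2) [:0, 1/2:]) = ([:-2, 1:]^2 :: real poly)"
    by (simp add: pcompose_pCons power2_eq_square)
  then have Q: "smult 4 (pcompose (chebQ n) [:0, 1/2:]) = [:-2, 1:]^2 * R"
    unfolding S R_def pcompose_mult by (metis mult_smult_left)
  show ?thesis
  proof (intro exI conjI)
    show "Phi n = [:-2, 1:]^2 * chebUet n * R"
      unfolding Phi_eq_chebUet_mult_chebQ Q by (simp only: ac_simps)
  qed (fact Q Phi_eq_chebUet_mult_chebQ)+
qed

end
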